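(* Let $(P_t)_{t\in\mathbb{R}_+}$ be a stochastically monotone Feller semigroup on $\mathbb{R}$, and define Markov kernels $\tilde{P}_t$ on $\overline{\mathbb{R}}$ by $\tilde{P}_t(x,B)=P_t(x,B\cap\mathbb{R})$ for $x\in\mathbb{R}$, $\tilde{P}_t(+\infty,\cdot)=\delta_{+\infty}$ and $\tilde{P}_t(-\infty,\cdot)=\delta_{-\infty}$. Then $(\tilde{P}_t)_{t\ge0}$ is a Feller semigroup on $\overline{\mathbb{R}}$: for every $t\ge0$ and every continuous $f:\overline{\mathbb{R}}\to\mathbb{R}$, $\tilde{P}_tf$ is continuous on $\overline{\mathbb{R}}$, and $\lim_{t\to0^+}\sup_{x\in\overline{\mathbb{R}}}|\tilde{P}_tf(x)-f(x)|=0$.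
   Context: $\overline{\mathbb{R}}=[-\infty,+\infty]$ with metric $d_1(x,y)=|\tanh y-\tanh x|$, a compact metric space. A Markov semigroup $(P_t)$ ($P_0(x,\cdot)=\delta_x$, $P_{s+t}=P_sP_t$) on $\mathbb{R}$ is Feller if $P_tf\in\mathcal{C}_0(\mathbb{R})$ for $f\in\mathcal{C}_0(\mathbb{R})$ (continuous, vanishing at $\pm\infty$) and $\sup_x|P_tf(x)-f(x)|\to0$ as $t\to0^+$; it is stochastically monotone if $P_tf$ is non-decreasing whenever $f$ is bounded, Borel and non-decreasing. *)

theory Defs
  imports "HOL-Probability.Probability"
begin

definition C0 :: "(real \<Rightarrow> real) \<Rightarrow> bool" where
  "C0 f \<longleftrightarrow> continuous_on UNIV f \<and> (f \<longlongrightarrow> 0) at_top \<and> (f \<longlongrightarrow> 0) at_bot"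

definition kernel_apply :: "('a \<Rightarrow> 'b measure) \<Rightarrow> ('b \<Rightarrow> real) \<Rightarrow> 'a \<Rightarrow> real" where
  "kernel_apply K f x = (\<integral>y. f y \<partial>K x)"

definition markov_semigroup :: "(real \<Rightarrow> real \<Rightarrow> real measure) \<Rightarrow> bool" where
  "markov_semigroup P \<longleftrightarrow>
     (\<forall>t\<ge>0. P t \<in> borel \<rightarrow>\<^sub>M prob_algebra borel) \<and>
     (\<forall>x. P 0 x = return borel x) \<and>
     (\<forall>s\<ge>0. \<forall>t\<ge>0. \<forall>x. P (s + t) x = P s x \<bind> P t)"

definition feller :: "(real \<Rightarrow> real \<Rightarrow> real measure) \<Rightarrow> bool" where
  "feller P \<longleftrightarrow>
     (\<forall>t\<ge>0. \<forall>f. C0 f \<longrightarrow> C0 (kernel_apply (P t) f)) \<and>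
     (\<forall>f. C0 f \<longrightarrow> uniform_limit UNIV (\<lambda>t. kernel_apply (P t) f) f (at_right 0))"

definition stoch_monotone :: "(real \<Rightarrow> real \<Rightarrow> real measure) \<Rightarrow> bool" where
  "stoch_monotone P \<longleftrightarrow>
     (\<forall>t\<ge>0. \<forall>f::real \<Rightarrow> real. bounded (range f) \<and> f \<in> borel_measurable borel \<and> mono f
        \<longrightarrow> mono (kernel_apply (P t) f))"

definition ext_kernel :: "(real \<Rightarrow> real \<Rightarrow> real measure) \<Rightarrow> real \<Rightarrow> ereal \<Rightarrow> ereal measure" where
  "ext_kernel P t x = (case x of ereal r \<Rightarrow> distr (P t r) borel ereal
                         | PInfty \<Rightarrow> return borel PInfty
                         | MInfty \<Rightarrow> return borel MInfty)"

end

theory Submission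
  imports Defs
begin

text \<open>
  A continuous \<open>f\<close> on the extended line splits as
  \<open>f \<circ> ereal = f(-\<infinity>) + (f(\<infinity>) - f(-\<infinity>)) ramp\<^sub>0 + h\<close> with \<open>h\<close> in \<open>C\<^sub>0\<close>, where
  \<open>ramp\<^sub>a\<close> rises linearly from 0 at \<open>a\<close> to 1 at \<open>a + 1\<close>. By linearity and the Feller property
  on \<open>C\<^sub>0\<close> everything reduces to the functions \<open>P\<^sub>t ramp\<^sub>a\<close>. These are non-decreasing with
  values in \<open>[0,1]\<close> by stochastic monotonicity, and any two of them differ by a \<open>C\<^sub>0\<close>
  function because \<open>ramp\<^sub>a - ramp\<^sub>b\<close> is in \<open>C\<^sub>0\<close>. For fixed \<open>x\<close>, \<open>P\<^sub>t ramp\<^sub>b(x)\<close> tends to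
  0 as \<open>b \<rightarrow> \<infinity>\<close> and to 1 as \<open>b \<rightarrow> -\<infinity>\<close>; by monotonicity in \<open>x\<close> this is uniform on
  half-lines, which gives continuity of \<open>P\<^sub>t ramp\<^sub>a\<close> and its limits 1 and 0 at \<open>\<plusminus>\<infinity>\<close>.
  Comparing with \<open>ramp\<^sub>a - ramp\<^sub>a\<^sub>+\<^sub>1\<close> and \<open>ramp\<^sub>a\<^sub>-\<^sub>1 - ramp\<^sub>a\<close> gives uniform convergence
  as \<open>t \<rightarrow> 0\<close>.
\<close>

definition ramp :: "real \<Rightarrow> real \<Rightarrow> real" where
  "ramp a y = max 0 (min 1 (y - a))"

lemma ramp_nonneg: "0 \<le> ramp a y"
  and ramp_le_one: "ramp a y \<le> 1"
  unfolding ramp_def by auto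

lemma ramp_eq_0: "y \<le> a \<Longrightarrow> ramp a y = 0"
  and ramp_eq_1: "a + 1 \<le> y \<Longrightarrow> ramp a y = 1"
  unfolding ramp_def by auto

lemma mono_ramp: "mono (ramp a)"
  unfolding ramp_def mono_def by auto

lemma continuous_on_ramp: "continuous_on UNIV (ramp a)"
  unfolding ramp_def by (intro continuous_intros)

lemma borel_measurable_ramp: "ramp a \<in> borel_measurable borel"
  by (rule borel_measurable_continuous_onI[OF continuous_on_ramp])

lemma bounded_range_ramp: "bounded (range (ramp a))"
  unfolding bounded_iff using ramp_nonneg ramp_le_one by (metis abs_of_nonneg rangeE real_norm_def)

lemma ramp_tendsto_at_top: "(ramp a \<longlongrightarrow> 1) at_top"
  by (intro tendsto_eventually eventually_mono[OF eventually_ge_at_top[of "a + 1"]] ramp_eq_1)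

lemma ramp_tendsto_at_bot: "(ramp a \<longlongrightarrow> 0) at_bot"
  by (intro tendsto_eventually eventually_mono[OF eventually_le_at_bot[of a]] ramp_eq_0)

lemma C0_ramp_diff: "C0 (\<lambda>y. ramp a y - ramp b y)"
  unfolding C0_def
  using tendsto_diff[OF ramp_tendsto_at_top ramp_tendsto_at_top, of a b]
    tendsto_diff[OF ramp_tendsto_at_bot ramp_tendsto_at_bot, of a b]
  by (auto intro!: continuous_on_diff continuous_on_ramp)

lemma at_minus_infty_ereal_eq_at_bot: "at (-\<infinity>) = filtermap ereal at_bot"
  using at_eq_sup_left_right[of "-\<infinity>::ereal"] trivial_limit_at_left_bot[where 'a=ereal]
  by (simp add: at_right_MInf bot_ereal_def)

lemma continuous_on_UNIV_ereal_iff: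
  fixes f :: "ereal \<Rightarrow> 'a::topological_space"
  shows "continuous_on UNIV f \<longleftrightarrow>
    continuous_on UNIV (f \<circ> ereal) \<and> ((f \<circ> ereal) \<longlongrightarrow> f \<infinity>) at_top
      \<and> ((f \<circ> ereal) \<longlongrightarrow> f (-\<infinity>)) at_bot"
  unfolding continuous_on_eq_continuous_at[OF open_UNIV] continuous_at ball_UNIV ereal_all_split at_ereal
    at_infty_ereal_eq_at_top at_minus_infty_ereal_eq_at_bot tendsto_compose_filtermap[symmetric] comp_apply
  by auto

lemma uniform_limit_UNIV_ereal:
  fixes F :: "'a \<Rightarrow> ereal \<Rightarrow> 'b::metric_space"
  assumes "uniform_limit UNIV (\<lambda>t. F t \<circ> ereal) (f \<circ> ereal) G"
    and "\<And>t. F t \<infinity> = f \<infinity>" and "\<And>t. F t (-\<infinity>) = f (-\<infinity>)"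
  shows "uniform_limit UNIV F f G"
  unfolding uniform_limit_iff
proof (intro allI impI)
  fix e :: real assume "e > 0"
  with assms(1) have "eventually (\<lambda>t. \<forall>y. dist (F t (ereal y)) (f (ereal y)) < e) G"
    unfolding uniform_limit_iff by simp
  then show "eventually (\<lambda>t. \<forall>z\<in>UNIV. dist (F t z) (f z) < e) G"
    by eventually_elim (simp add: ereal_all_split assms(2,3) \<open>e > 0\<close>)
qed

definition ereal_C0_part :: "(ereal \<Rightarrow> real) \<Rightarrow> real \<Rightarrow> real" where
  "ereal_C0_part f y = f (ereal y) - f (-\<infinity>) - (f \<infinity> - f (-\<infinity>)) * ramp 0 y"

lemma C0_ereal_C0_part:
  assumes "continuous_on UNIV f"
  shows "C0 (ereal_C0_part f)"
proof -
  have f: "continuous_on UNIV (f \<circ> ereal)" "((f \<circ> ereal) \<longlongrightarrow> f \<infinity>) at_top"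
      "((f \<circ> ereal) \<longlongrightarrow> f (-\<infinity>)) at_bot"
    using assms unfolding continuous_on_UNIV_ereal_iff by auto
  have "(ereal_C0_part f \<longlongrightarrow> f \<infinity> - f (-\<infinity>) - (f \<infinity> - f (-\<infinity>)) * 1) at_top"
    unfolding ereal_C0_part_def using f(2) ramp_tendsto_at_top
    by (intro tendsto_intros) (simp_all add: comp_def)
  moreover have "(ereal_C0_part f \<longlongrightarrow> f (-\<infinity>) - f (-\<infinity>) - (f \<infinity> - f (-\<infinity>)) * 0) at_bot"
    unfolding ereal_C0_part_def using f(3) ramp_tendsto_at_bot
    by (intro tendsto_intros) (simp_all add: comp_def)
  moreover have "continuous_on UNIV (ereal_C0_part f)"
    unfolding ereal_C0_part_def using f(1) continuous_on_ramp
    by (intro continuous_intros) (simp_all add: comp_def)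
  ultimately show ?thesis
    unfolding C0_def by simp
qed

lemma kernel_apply_ext_kernel_PInf:
  "f \<in> borel_measurable borel \<Longrightarrow> kernel_apply (ext_kernel P t) f \<infinity> = f \<infinity>"
  unfolding kernel_apply_def ext_kernel_def by (simp add: integral_return)

lemma kernel_apply_ext_kernel_MInf:
  "f \<in> borel_measurable borel \<Longrightarrow> kernel_apply (ext_kernel P t) f (-\<infinity>) = f (-\<infinity>)"
  unfolding kernel_apply_def ext_kernel_def by (simp add: integral_return)

locale monotone_feller_kernels =
  fixes P :: "real \<Rightarrow> real \<Rightarrow> real measure"
  assumes kernel_P: "t \<ge> 0 \<Longrightarrow> P t \<in> borel \<rightarrow>\<^sub>M prob_algebra borel"
    and feller_P: "feller P"
    and stoch_monotone_P: "stoch_monotone P"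
begin

abbreviation K :: "real \<Rightarrow> (real \<Rightarrow> real) \<Rightarrow> real \<Rightarrow> real" where
  "K t \<equiv> kernel_apply (P t)"

lemma prob_space_P: "t \<ge> 0 \<Longrightarrow> prob_space (P t x)"
  and sets_P: "t \<ge> 0 \<Longrightarrow> sets (P t x) = sets borel"
  using measurable_space[OF kernel_P, of t x] by (auto simp: space_prob_algebra)

lemma measurable_P: "t \<ge> 0 \<Longrightarrow> g \<in> borel_measurable borel \<Longrightarrow> g \<in> borel_measurable (P t x)"
  using measurable_cong_sets[OF sets_P refl] by blast

lemma integrable_P:
  fixes g :: "real \<Rightarrow> real"
  assumes "t \<ge> 0" "g \<in> borel_measurable borel" "bounded (range g)"
  shows "integrable (P t x) g"
proof -
  interpret prob_space "P t x" using prob_space_P[OF assms(1)] .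
  obtain B where "\<And>y. norm (g y) \<le> B" using assms(3) unfolding bounded_iff by auto
  then have "AE y in P t x. norm (g y) \<le> B" by simp
  moreover have "g \<in> borel_measurable (P t x)"
    using measurable_P assms(1,2) .
  ultimately show ?thesis by (rule integrable_const_bound)
qed

lemma integrable_ramp: "t \<ge> 0 \<Longrightarrow> integrable (P t x) (ramp a)"
  by (intro integrable_P borel_measurable_ramp bounded_range_ramp)

lemma kernel_ramp_nonneg: "0 \<le> K t (ramp a) x"
  unfolding kernel_apply_def by (simp add: ramp_nonneg)

lemma kernel_ramp_le_one: "t \<ge> 0 \<Longrightarrow> K t (ramp a) x \<le> 1"
  unfolding kernel_apply_def
  by (intro prob_space.integral_le_const prob_space_P integrable_ramp AE_I2 ramp_le_one)

lemma mono_kernel_ramp: "t \<ge> 0 \<Longrightarrow> mono (K t (ramp a))"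
  using stoch_monotone_P borel_measurable_ramp bounded_range_ramp mono_ramp
  unfolding stoch_monotone_def by blast

lemma kernel_ramp_diff: "t \<ge> 0 \<Longrightarrow> K t (\<lambda>y. ramp a y - ramp b y) x = K t (ramp a) x - K t (ramp b) x"
  unfolding kernel_apply_def by (intro Bochner_Integration.integral_diff integrable_ramp)

lemma C0_kernel_ramp_diff:
  assumes "t \<ge> 0"
  shows "C0 (\<lambda>x. K t (ramp a) x - K t (ramp b) x)"
proof -
  have "C0 (K t (\<lambda>y. ramp a y - ramp b y))"
    using feller_P C0_ramp_diff assms unfolding feller_def by blast
  moreover have "K t (\<lambda>y. ramp a y - ramp b y) = (\<lambda>x. K t (ramp a) x - K t (ramp b) x)"
    using kernel_ramp_diff[OF assms] by (intro ext)
  ultimately show ?thesis by simp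
qed

lemma uniform_limit_kernel_ramp_diff:
  "uniform_limit UNIV (\<lambda>t x. K t (ramp a) x - K t (ramp b) x) (\<lambda>x. ramp a x - ramp b x) (at_right 0)"
proof -
  have "uniform_limit UNIV (\<lambda>t. K t (\<lambda>y. ramp a y - ramp b y)) (\<lambda>x. ramp a x - ramp b x) (at_right 0)"
    using feller_P C0_ramp_diff unfolding feller_def by blast
  moreover have "eventually (\<lambda>t. \<forall>x\<in>UNIV. K t (\<lambda>y. ramp a y - ramp b y) x = K t (ramp a) x - K t (ramp b) x) (at_right 0)"
    using eventually_at_right_less[of "0::real"] by eventually_elim (simp add: kernel_ramp_diff)
  ultimately show ?thesis
    by (simp add: uniform_limit_cong)
qed

lemma kernel_ramp_level_tendsto_at_top:
  assumes "t \<ge> 0"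
  shows "((\<lambda>b. K t (ramp b) x) \<longlongrightarrow> 0) at_top"
proof -
  have "((\<lambda>b. integral\<^sup>L (P t x) (ramp b)) \<longlongrightarrow> integral\<^sup>L (P t x) (\<lambda>_. 0)) at_top"
  proof (rule integral_dominated_convergence_at_top[where w="\<lambda>_. 1"])
    show "AE y in P t x. ((\<lambda>b. ramp b y) \<longlongrightarrow> 0) at_top"
      by (intro AE_I2 tendsto_eventually eventually_mono[OF eventually_ge_at_top] ramp_eq_0)
    show "\<forall>\<^sub>F b in at_top. AE y in P t x. norm (ramp b y) \<le> 1"
      using ramp_nonneg ramp_le_one by simp
  qed (use assms in \<open>auto intro: measurable_P borel_measurable_ramp integrable_P\<close>)
  then show ?thesis
    unfolding kernel_apply_def by simp
qed

lemma kernel_ramp_level_tendsto_at_bot: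
  assumes "t \<ge> 0"
  shows "((\<lambda>a. K t (ramp a) x) \<longlongrightarrow> 1) at_bot"
proof -
  have "((\<lambda>a. integral\<^sup>L (P t x) (ramp (- a))) \<longlongrightarrow> integral\<^sup>L (P t x) (\<lambda>_. 1)) at_top"
  proof (rule integral_dominated_convergence_at_top[where w="\<lambda>_. 1"])
    have "eventually (\<lambda>a. ramp (- a) y = 1) at_top" for y
      using eventually_ge_at_top[of "1 - y"] by eventually_elim (rule ramp_eq_1, linarith)
    then show "AE y in P t x. ((\<lambda>a. ramp (- a) y) \<longlongrightarrow> 1) at_top"
      by (intro AE_I2 tendsto_eventually)
    show "\<forall>\<^sub>F a in at_top. AE y in P t x. norm (ramp (- a) y) \<le> 1"
      using ramp_nonneg ramp_le_one by simp
  qed (use assms in \<open>auto intro: measurable_P borel_measurable_ramp integrable_P\<close>)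
  then show ?thesis
    unfolding filterlim_at_bot_mirror kernel_apply_def
    using prob_space.prob_space[OF prob_space_P[OF assms]] by simp
qed

lemma continuous_on_kernel_ramp:
  assumes t: "t \<ge> 0"
  shows "continuous_on UNIV (K t (ramp a))"
  unfolding continuous_on_eq_continuous_at[OF open_UNIV]
proof (intro ballI)
  fix x0 :: real
  let ?U = "{..<x0 + 1}"
  have "uniform_limit ?U (\<lambda>b x. K t (ramp a) x - K t (ramp b) x) (K t (ramp a)) at_top"
    unfolding uniform_limit_iff
  proof (intro allI impI)
    fix e :: real assume "e > 0"
    then have "eventually (\<lambda>b. K t (ramp b) (x0 + 1) < e) at_top"
      using order_tendstoD(2)[OF kernel_ramp_level_tendsto_at_top[OF t]] by blast
    then show "eventually (\<lambda>b. \<forall>x\<in>?U. dist (K t (ramp a) x - K t (ramp b) x) (K t (ramp a) x) < e) at_top"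
    proof eventually_elim
      case (elim b)
      have "K t (ramp b) x \<le> K t (ramp b) (x0 + 1)" if "x \<in> ?U" for x
        using mono_kernel_ramp[OF t] that by (simp add: mono_def)
      then show ?case
        using elim kernel_ramp_nonneg by (force simp: dist_real_def)
    qed
  qed
  moreover have "continuous_on ?U (\<lambda>x. K t (ramp a) x - K t (ramp b) x)" for b
    using C0_kernel_ramp_diff[OF t] continuous_on_subset unfolding C0_def by blast
  then have "\<forall>\<^sub>F b in at_top. continuous_on ?U (\<lambda>x. K t (ramp a) x - K t (ramp b) x)"
    by simp
  ultimately have "continuous_on ?U (K t (ramp a))"
    by (intro uniform_limit_theorem) auto
  then show "isCont (K t (ramp a)) x0"
    by (simp add: continuous_on_eq_continuous_at)
qed

lemma kernel_ramp_tendsto_at_top: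
  assumes t: "t \<ge> 0"
  shows "(K t (ramp a) \<longlongrightarrow> 1) at_top"
proof (rule tendstoI)
  fix e :: real assume e: "e > 0"
  have "eventually (\<lambda>c. 1 - e/2 < K t (ramp c) 0) at_bot"
    using order_tendstoD(1)[OF kernel_ramp_level_tendsto_at_bot[OF t]] e by simp
  then obtain c where c: "1 - e/2 < K t (ramp c) 0"
    by (auto simp: eventually_at_bot_linorder)
  have "((\<lambda>x. K t (ramp c) x - K t (ramp a) x) \<longlongrightarrow> 0) at_top"
    using C0_kernel_ramp_diff[OF t] unfolding C0_def by blast
  from tendstoD[OF this, of "e/2"] e
  have "eventually (\<lambda>x. dist (K t (ramp c) x - K t (ramp a) x) 0 < e/2) at_top"
    by simp
  then show "eventually (\<lambda>x. dist (K t (ramp a) x) 1 < e) at_top"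
    using eventually_ge_at_top[of 0]
  proof eventually_elim
    case (elim x)
    have "K t (ramp c) 0 \<le> K t (ramp c) x"
      using mono_kernel_ramp[OF t] elim(2) by (simp add: mono_def)
    then show ?case
      using elim(1) c kernel_ramp_le_one[OF t, of a x] unfolding dist_real_def by linarith
  qed
qed

lemma kernel_ramp_tendsto_at_bot:
  assumes t: "t \<ge> 0"
  shows "(K t (ramp a) \<longlongrightarrow> 0) at_bot"
proof (rule tendstoI)
  fix e :: real assume e: "e > 0"
  have "eventually (\<lambda>b. K t (ramp b) 0 < e/2) at_top"
    using order_tendstoD(2)[OF kernel_ramp_level_tendsto_at_top[OF t, where x=0], of "e/2"] e by simp
  then obtain b where b: "K t (ramp b) 0 < e/2"
    by (auto simp: eventually_at_top_linorder)
  have "((\<lambda>x. K t (ramp a) x - K t (ramp b) x) \<longlongrightarrow> 0) at_bot"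
    using C0_kernel_ramp_diff[OF t] unfolding C0_def by blast
  from tendstoD[OF this, of "e/2"] e
  have "eventually (\<lambda>x. dist (K t (ramp a) x - K t (ramp b) x) 0 < e/2) at_bot"
    by simp
  then show "eventually (\<lambda>x. dist (K t (ramp a) x) 0 < e) at_bot"
    using eventually_le_at_bot[of 0]
  proof eventually_elim
    case (elim x)
    have "K t (ramp b) x \<le> K t (ramp b) 0"
      using mono_kernel_ramp[OF t] elim(2) by (simp add: mono_def)
    then show ?case
      using elim(1) b kernel_ramp_nonneg[of t a x] unfolding dist_real_def by linarith
  qed
qed

lemma uniform_limit_kernel_ramp: "uniform_limit UNIV (\<lambda>t. K t (ramp a)) (ramp a) (at_right 0)"
  unfolding uniform_limit_iff
proof (intro allI impI)
  fix e :: real assume "e > 0"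
  show "eventually (\<lambda>t. \<forall>x\<in>UNIV. dist (K t (ramp a) x) (ramp a x) < e) (at_right 0)"
    using uniform_limitD[OF uniform_limit_kernel_ramp_diff[of a "a + 1"] \<open>e > 0\<close>]
      uniform_limitD[OF uniform_limit_kernel_ramp_diff[of "a - 1" a] \<open>e > 0\<close>]
      eventually_at_right_less[of "0::real"]
  proof eventually_elim
    case (elim t)
    then have t: "t \<ge> 0" by simp
    have lower_near: "ramp a x - e < K t (ramp a) x" if "x \<le> a + 1" for x
      using elim(1)[rule_format, of x] kernel_ramp_nonneg[of t "a + 1" x] ramp_eq_0[OF that]
      by (auto simp: dist_real_def abs_less_iff)
    have upper_near: "K t (ramp a) x < ramp a x + e" if "a \<le> x" for x
      using elim(2)[rule_format, of x] kernel_ramp_le_one[OF t, of "a - 1" x] ramp_eq_1[of "a - 1" x] that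
      by (auto simp: dist_real_def abs_less_iff)
    have "ramp a x - e < K t (ramp a) x \<and> K t (ramp a) x < ramp a x + e" for x
    proof
      show "ramp a x - e < K t (ramp a) x"
      proof (cases "x \<le> a + 1")
        case False
        then have "K t (ramp a) (a + 1) \<le> K t (ramp a) x"
          using mono_kernel_ramp[OF t] by (simp add: mono_def)
        then show ?thesis
          using lower_near[of "a + 1"] ramp_eq_1[of a "a + 1"] ramp_le_one[of a x] by simp
      qed (rule lower_near)
      show "K t (ramp a) x < ramp a x + e"
      proof (cases "a \<le> x")
        case False
        then have "K t (ramp a) x \<le> K t (ramp a) a"
          using mono_kernel_ramp[OF t] by (simp add: mono_def)
        then show ?thesis
          using upper_near[of a] ramp_eq_0[of a a] ramp_nonneg[of a x] by simp
      qed (rule upper_near)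
    qed
    then show ?case
      by (simp add: dist_real_def abs_diff_less_iff)
  qed
qed

lemma kernel_apply_ext_kernel_ereal:
  assumes "t \<ge> 0" "f \<in> borel_measurable borel"
  shows "kernel_apply (ext_kernel P t) f (ereal r) = K t (f \<circ> ereal) r"
proof -
  have "ereal \<in> P t r \<rightarrow>\<^sub>M borel"
    using assms(1) by (intro measurable_P) auto
  then show ?thesis
    unfolding kernel_apply_def ext_kernel_def by (simp add: integral_distr[OF _ assms(2)] comp_def)
qed

lemma kernel_apply_ereal_decomposition:
  assumes t: "t \<ge> 0" and f: "continuous_on UNIV f"
  shows "K t (f \<circ> ereal) x = f (-\<infinity>) + (f \<infinity> - f (-\<infinity>)) * K t (ramp 0) x + K t (ereal_C0_part f) x"
proof -
  have "continuous_on UNIV (f \<circ> ereal)"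
    using f unfolding continuous_on_UNIV_ereal_iff by blast
  moreover have "bounded (range (f \<circ> ereal))"
    using compact_imp_bounded[OF compact_continuous_image[OF f compact_UNIV]]
    by (rule bounded_subset) auto
  ultimately have "integrable (P t x) (f \<circ> ereal)"
    by (intro integrable_P t borel_measurable_continuous_onI)
  interpret prob_space "P t x"
    using prob_space_P[OF t] .
  show ?thesis
    using \<open>integrable (P t x) (f \<circ> ereal)\<close>
      integrable_ramp[OF t] unfolding kernel_apply_def ereal_C0_part_def by (simp add: comp_def prob_space)
qed

lemma kernel_apply_ereal_extends_continuously:
  assumes t: "t \<ge> 0" and f: "continuous_on UNIV f"
  shows "continuous_on UNIV (K t (f \<circ> ereal))
    \<and> (K t (f \<circ> ereal) \<longlongrightarrow> f \<infinity>) at_top \<and> (K t (f \<circ> ereal) \<longlongrightarrow> f (-\<infinity>)) at_bot"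
proof -
  have h: "C0 (K t (ereal_C0_part f))"
    using feller_P C0_ereal_C0_part[OF f] t unfolding feller_def by blast
  have decomp: "K t (f \<circ> ereal) = (\<lambda>x. f (-\<infinity>) + (f \<infinity> - f (-\<infinity>)) * K t (ramp 0) x + K t (ereal_C0_part f) x)"
    using kernel_apply_ereal_decomposition[OF t f] by (intro ext)
  have "continuous_on UNIV (K t (f \<circ> ereal))"
    unfolding decomp using continuous_on_kernel_ramp[OF t] h unfolding C0_def
    by (intro continuous_intros) auto
  moreover have "(K t (f \<circ> ereal) \<longlongrightarrow> f (-\<infinity>) + (f \<infinity> - f (-\<infinity>)) * 1 + 0) at_top"
    unfolding decomp using kernel_ramp_tendsto_at_top[OF t] h unfolding C0_def
    by (intro tendsto_intros) auto
  moreover have "(K t (f \<circ> ereal) \<longlongrightarrow> f (-\<infinity>) + (f \<infinity> - f (-\<infinity>)) * 0 + 0) at_bot"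
    unfolding decomp using kernel_ramp_tendsto_at_bot[OF t] h unfolding C0_def
    by (intro tendsto_intros) auto
  ultimately show ?thesis
    by simp
qed

lemma uniform_limit_kernel_apply_ereal:
  assumes f: "continuous_on UNIV f"
  shows "uniform_limit UNIV (\<lambda>t. K t (f \<circ> ereal)) (f \<circ> ereal) (at_right 0)"
proof -
  have lim: "uniform_limit UNIV (\<lambda>t x. f (-\<infinity>) + (f \<infinity> - f (-\<infinity>)) * K t (ramp 0) x + K t (ereal_C0_part f) x)
      (\<lambda>x. f (-\<infinity>) + (f \<infinity> - f (-\<infinity>)) * ramp 0 x + ereal_C0_part f x) (at_right 0)"
    using uniform_limit_kernel_ramp feller_P C0_ereal_C0_part[OF f] unfolding feller_def
    by (intro uniform_limit_intros) auto
  have eq: "eventually (\<lambda>t. \<forall>x\<in>UNIV. f (-\<infinity>) + (f \<infinity> - f (-\<infinity>)) * K t (ramp 0) x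
      + K t (ereal_C0_part f) x = K t (f \<circ> ereal) x) (at_right 0)"
    using eventually_at_right_less[of "0::real"]
    by eventually_elim (simp add: kernel_apply_ereal_decomposition[OF _ f])
  show ?thesis
    by (rule uniform_limit_cong[THEN iffD1, OF eq _ lim]) (simp add: ereal_C0_part_def)
qed

end

theorem proposition2p8:
  fixes P :: "real \<Rightarrow> real \<Rightarrow> real measure"
  assumes "markov_semigroup P" and "feller P" and "stoch_monotone P"
  shows "(\<forall>t\<ge>0. \<forall>f :: ereal \<Rightarrow> real. continuous_on UNIV f \<longrightarrow>
            continuous_on UNIV (kernel_apply (ext_kernel P t) f))
       \<and> (\<forall>f :: ereal \<Rightarrow> real. continuous_on UNIV f \<longrightarrow>
            uniform_limit UNIV (\<lambda>t. kernel_apply (ext_kernel P t) f) f (at_right 0))"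
proof -
  interpret monotone_feller_kernels P
    using assms by unfold_locales (auto simp: markov_semigroup_def)
  have restrict: "kernel_apply (ext_kernel P t) f \<circ> ereal = K t (f \<circ> ereal)"
    if "t \<ge> 0" "continuous_on UNIV f" for t and f :: "ereal \<Rightarrow> real"
    using kernel_apply_ext_kernel_ereal[OF that(1) borel_measurable_continuous_onI[OF that(2)]] by auto
  have infinities: "kernel_apply (ext_kernel P t) f \<infinity> = f \<infinity>"
      "kernel_apply (ext_kernel P t) f (-\<infinity>) = f (-\<infinity>)"
    if "continuous_on UNIV f" for t and f :: "ereal \<Rightarrow> real"
    using borel_measurable_continuous_onI[OF that]
    by (simp_all add: kernel_apply_ext_kernel_PInf kernel_apply_ext_kernel_MInf)
  show ?thesis
  proof (intro conjI allI impI)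
    show "continuous_on UNIV (kernel_apply (ext_kernel P t) f)"
      if "t \<ge> 0" "continuous_on UNIV f" for t and f :: "ereal \<Rightarrow> real"
      unfolding continuous_on_UNIV_ereal_iff restrict[OF that] infinities[OF that(2)]
      by (rule kernel_apply_ereal_extends_continuously[OF that])
    show "uniform_limit UNIV (\<lambda>t. kernel_apply (ext_kernel P t) f) f (at_right 0)"
      if "continuous_on UNIV f" for f :: "ereal \<Rightarrow> real"
    proof (rule uniform_limit_UNIV_ereal)
      have "eventually (\<lambda>t. \<forall>x\<in>UNIV. K t (f \<circ> ereal) x = (kernel_apply (ext_kernel P t) f \<circ> ereal) x) (at_right 0)"
        using eventually_at_right_less[of "0::real"] by eventually_elim (simp add: restrict that)
      then show "uniform_limit UNIV (\<lambda>t. kernel_apply (ext_kernel P t) f \<circ> ereal) (f \<circ> ereal) (at_right 0)"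
        by (rule uniform_limit_cong[THEN iffD1, OF _ _ uniform_limit_kernel_apply_ereal[OF that]]) simp
    qed (use infinities[OF that] in auto)
  qed
qed

end
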